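(* Let $n>1$ be odd, and let $R\subseteq (A_n)^{3n}$ be the set of all tuples $((1,x_1),(2,x_2),\dots,(n,x_n),(1,x_{n+1}),\dots,(n,x_{2n}),(1,x_{2n+1}),\dots,(n,x_{3n}))$ (i.e. the $j$-th entry is $(((j-1)\bmod n)+1,\,x_j)$) with $x_j\in\{0,1,2,3\}$ such that $x_{kn+1}\equiv x_{kn+2}\equiv\dots\equiv x_{kn+n}\pmod 2$ for each $k=0,1,2$, and $\sum_{i=1}^{3n}x_i\equiv 2\pmod 4$. Then $R$ is a subuniverse of $(\mathbf{A}_n)^{3n}$, i.e. it is closed under coordinatewise application of each $t_i$.
   Context: Let $[n]=\{1,\dots,n\}$ and let $m$ be the minority operation on $[n]$ given by $m(x,y,z)=x$ if $y=z$, $m(x,y,z)=y$ if $x=z$, and $m(x,y,z)=z$ otherwise. On $\{0,1,2,3\}$, $+,-$ denote arithmetic modulo 4 and $\oplus$ denotes bitwise XOR of 2-bit binary representations. Let $A_n=[n]\times\{0,1,2,3\}$. For $i\in[n]$ define the ternary operation $t_i$ on $A_n$ by $t_i((a_1,b_1),(a_2,b_2),(a_3,b_3))=(i,\,b_1-b_2+b_3)$ if $a_1=a_2=a_3=i$, and $=(m(a_1,a_2,a_3),\,b_1\oplus b_2\oplus b_3)$ otherwise. The algebra $\mathbf{A}_n$ has universe $A_n$ and basic operations $t_1,\dots,t_n$. *)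

theory Defs
  imports Main
begin

definition minority :: "nat \<Rightarrow> nat \<Rightarrow> nat \<Rightarrow> nat" where
  "minority x y z = (if y = z then x else if x = z then y else z)"

definition A :: "nat \<Rightarrow> (nat \<times> nat) set" where
  "A n = {1..n} \<times> {0..3}"

definition t :: "nat \<Rightarrow> nat \<times> nat \<Rightarrow> nat \<times> nat \<Rightarrow> nat \<times> nat \<Rightarrow> nat \<times> nat" where
  "t i p q r = (let (a1,b1) = p; (a2,b2) = q; (a3,b3) = r in
     if a1 = i \<and> a2 = i \<and> a3 = i
     then (i, nat ((int b1 - int b2 + int b3) mod 4))
     else (minority a1 a2 a3, xor (xor b1 b2) b3))"

(* R as a set of lists of length 3n; list index j (0-based) corresponds to entry j+1 *)
definition R :: "nat \<Rightarrow> (nat \<times> nat) list set" where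
  "R n = {v. length v = 3 * n \<and>
          (\<exists>x :: nat list. length x = 3 * n \<and> (\<forall>j < 3 * n. x ! j \<in> {0..3}) \<and>
             (\<forall>j < 3 * n. v ! j = (j mod n + 1, x ! j)) \<and>
             (\<forall>k < 3. \<forall>i < n. \<forall>i' < n. x ! (k * n + i) mod 2 = x ! (k * n + i') mod 2) \<and>
             (\<Sum>j < 3 * n. x ! j) mod 4 = 2)}"

end

theory Submission
  imports Defs
begin

text \<open>On a coordinate whose entries all carry the same label \<open>l\<close>, the operation \<open>t\<^sub>i\<close> acts on the
second components either as \<open>a - b + c\<close> (when \<open>l = i\<close>) or as \<open>a \<oplus> b \<oplus> c\<close>. Both agree with
\<open>a + b + c\<close> modulo 4 up to a correction \<open>2 e\<close>: \<open>e = b\<close> in the first case, and \<open>e\<close> is the carry of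
the lowest bits (the majority of the parities of \<open>a, b, c\<close>) in the second. Hence the parity of
each block is preserved, and the sum modulo 4 is preserved as soon as the corrections have even
sum. Within a block all parities agree, so the correction has a constant parity on the \<open>n - 1\<close>
coordinates not labelled \<open>i\<close> and the parity of \<open>b\<close> on the remaining one; since \<open>n\<close> is odd, the
block sum of the corrections therefore has the parity of the block sum of the \<open>b\<close>'s, and the
total sum of the \<open>b\<close>'s is even because it is \<open>2\<close> modulo 4.\<close>

definition xor3 :: "nat \<Rightarrow> nat \<Rightarrow> nat \<Rightarrow> nat" where
  "xor3 a b c = xor (xor a b) c"

definition maltsev4 :: "nat \<Rightarrow> nat \<Rightarrow> nat \<Rightarrow> nat" where
  "maltsev4 a b c = nat ((int a - int b + int c) mod 4)"

definition carry3 :: "nat \<Rightarrow> nat \<Rightarrow> nat \<Rightarrow> nat" where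
  "carry3 a b c = of_bool (2 \<le> a mod 2 + b mod 2 + c mod 2)"

definition t_val :: "nat \<Rightarrow> nat \<Rightarrow> nat \<Rightarrow> nat \<Rightarrow> nat \<Rightarrow> nat" where
  "t_val i l a b c = (if l = i then maltsev4 a b c else xor3 a b c)"

definition t_correction :: "nat \<Rightarrow> nat \<Rightarrow> nat \<Rightarrow> nat \<Rightarrow> nat \<Rightarrow> nat" where
  "t_correction i l a b c = (if l = i then b else carry3 a b c)"

lemma t_same_label: "t i (l, a) (l, b) (l, c) = (l, t_val i l a b c)"
  by (simp add: t_def minority_def t_val_def maltsev4_def xor3_def)

lemma maltsev4_lt_4: "maltsev4 a b c < 4"
  by (simp add: maltsev4_def nat_less_iff)

lemma maltsev4_add_mod_4: "(maltsev4 a b c + 2 * b) mod 4 = (a + b + c) mod 4"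
proof -
  have "int ((maltsev4 a b c + 2 * b) mod 4) = ((int a - int b + int c) mod 4 + 2 * int b) mod 4"
    by (simp add: maltsev4_def zmod_int)
  also have "\<dots> = (int a - int b + int c + 2 * int b) mod 4"
    by (simp add: mod_add_left_eq)
  also have "\<dots> = int ((a + b + c) mod 4)"
    by (simp add: zmod_int ac_simps)
  finally show ?thesis by simp
qed

lemma less_4_cases: "(a::nat) < 4 \<Longrightarrow> a = 0 \<or> a = 1 \<or> a = 2 \<or> a = 3"
  by auto

lemma xor3_lt_4: "a < 4 \<Longrightarrow> b < 4 \<Longrightarrow> c < 4 \<Longrightarrow> xor3 a b c < 4"
  by (auto simp: xor3_def dest!: less_4_cases)

lemma xor3_add_carry_mod_4:
  "a < 4 \<Longrightarrow> b < 4 \<Longrightarrow> c < 4 \<Longrightarrow> (xor3 a b c + 2 * carry3 a b c) mod 4 = (a + b + c) mod 4"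
  by (auto simp: xor3_def carry3_def dest!: less_4_cases)

lemma carry3_cong_mod_2:
  "a mod 2 = a' mod 2 \<Longrightarrow> b mod 2 = b' mod 2 \<Longrightarrow> c mod 2 = c' mod 2 \<Longrightarrow> carry3 a b c = carry3 a' b' c'"
  by (simp add: carry3_def)

lemma t_val_lt_4: "a < 4 \<Longrightarrow> b < 4 \<Longrightarrow> c < 4 \<Longrightarrow> t_val i l a b c < 4"
  by (simp add: t_val_def maltsev4_lt_4 xor3_lt_4)

lemma t_val_add_correction_mod_4:
  "a < 4 \<Longrightarrow> b < 4 \<Longrightarrow> c < 4 \<Longrightarrow>
    (t_val i l a b c + 2 * t_correction i l a b c) mod 4 = (a + b + c) mod 4"
  by (simp add: t_val_def t_correction_def maltsev4_add_mod_4 xor3_add_carry_mod_4)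

lemma mod_2_eq_if_add_double_mod_4_eq:
  fixes r e s :: nat
  assumes "(r + 2 * e) mod 4 = s mod 4"
  shows "r mod 2 = s mod 2"
proof -
  have "(r + 2 * e) mod 2 = s mod 2"
    using arg_cong[OF assms, of "\<lambda>x. x mod 2"] by (simp add: mod_mod_cancel)
  then show ?thesis by simp
qed

lemma sum_mod_4_eq_if_corrections_even:
  fixes r e s :: "'a \<Rightarrow> nat"
  assumes "\<And>j. j \<in> S \<Longrightarrow> (r j + 2 * e j) mod 4 = s j mod 4" and "even (sum e S)"
  shows "sum r S mod 4 = sum s S mod 4"
proof -
  have "(sum r S + 2 * sum e S) mod 4 = (\<Sum>j\<in>S. (r j + 2 * e j) mod 4) mod 4"
    by (simp add: mod_sum_eq sum.distrib sum_distrib_left)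
  also have "\<dots> = sum s S mod 4"
    by (simp add: assms(1) mod_sum_eq cong: sum.cong)
  finally show ?thesis
    using assms(2) by (auto elim!: evenE)
qed

lemma sum_lessThan_mult_blocks:
  fixes g :: "nat \<Rightarrow> 'a::comm_monoid_add"
  shows "(\<Sum>j<k * n. g j) = (\<Sum>b<k. \<Sum>m<n. g (b * n + m))"
proof -
  have "(\<Sum>m<n. g (b * n + m)) = sum g {b * n..<b * n + n}" for b
    using sum.shift_bounds_nat_ivl[of g 0 "b * n" n] by (simp add: atLeast0LessThan add.commute)
  then show ?thesis
    by (simp add: sum.nat_group)
qed

lemma even_sum_if_parity_constant_but_one:
  fixes g :: "nat \<Rightarrow> nat"
  assumes "odd n" "p < n" "even (g p)" "\<And>m. m < n \<Longrightarrow> m \<noteq> p \<Longrightarrow> odd (g m) \<longleftrightarrow> b"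
  shows "even (\<Sum>m<n. g m)"
proof -
  have "{m\<in>{..<n}. odd (g m)} = (if b then {..<n} - {p} else {})"
    using assms(3,4) by auto
  then show ?thesis
    using assms(1,2) by (simp add: even_sum_iff)
qed

definition labelled :: "nat \<Rightarrow> nat list \<Rightarrow> (nat \<times> nat) list" where
  "labelled n x = map (\<lambda>j. (j mod n + 1, x ! j)) [0..<length x]"

definition block_parity :: "nat \<Rightarrow> nat list \<Rightarrow> bool" where
  "block_parity n x \<longleftrightarrow> (\<forall>k<3. \<forall>i<n. \<forall>i'<n. x ! (k * n + i) mod 2 = x ! (k * n + i') mod 2)"

definition R_values :: "nat \<Rightarrow> nat list \<Rightarrow> bool" where
  "R_values n x \<longleftrightarrow> length x = 3 * n \<and> (\<forall>j<3 * n. x ! j < 4) \<and> block_parity n x \<and>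
     (\<Sum>j<3 * n. x ! j) mod 4 = 2"

lemma mem_R_iff: "u \<in> R n \<longleftrightarrow> (\<exists>x. R_values n x \<and> u = labelled n x)"
proof
  assume "u \<in> R n"
  then obtain x where u: "length u = 3 * n" "\<forall>j<3 * n. u ! j = (j mod n + 1, x ! j)"
    and x: "length x = 3 * n" "\<forall>j<3 * n. x ! j \<in> {0..3}" "block_parity n x"
      "(\<Sum>j<3 * n. x ! j) mod 4 = 2"
    unfolding R_def block_parity_def mem_Collect_eq by blast
  have "u = labelled n x"
    by (rule nth_equalityI) (simp_all add: u x(1) labelled_def)
  moreover have "R_values n x"
    using x by (auto simp: R_values_def)
  ultimately show "\<exists>x. R_values n x \<and> u = labelled n x" by blast
next
  assume "\<exists>x. R_values n x \<and> u = labelled n x"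
  then obtain x where x: "R_values n x" and u: "u = labelled n x" by blast
  have "length x = 3 * n" "\<forall>j<3 * n. x ! j \<in> {0..3}"
    "\<forall>j<3 * n. u ! j = (j mod n + 1, x ! j)"
    using x u by (auto simp: R_values_def labelled_def)
  with x show "u \<in> R n"
    unfolding R_def R_values_def block_parity_def by (auto simp: u labelled_def)
qed

lemma R_subset_lists_A: "0 < n \<Longrightarrow> R n \<subseteq> lists (A n)"
  by (fastforce simp: mem_R_iff R_values_def labelled_def A_def Suc_le_eq in_set_conv_nth)

lemma block_parity_mod_2:
  assumes "block_parity n x" "k < 3" "m < n"
  shows "x ! (k * n + m) mod 2 = x ! (k * n) mod 2"
proof -
  have "0 < n"
    using assms(3) by simp
  then show ?thesis
    using assms(1)[unfolded block_parity_def, rule_format, OF assms(2,3)] by (metis add_0_right)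
qed

lemma block_index_less:
  fixes k m n :: nat
  assumes "k < 3" "m < n"
  shows "k * n + m < 3 * n"
proof -
  have "k * n + n \<le> 3 * n"
    using mult_le_mono1[of "k + 1" 3 n] assms(1) by simp
  then show ?thesis
    using assms(2) by linarith
qed

lemma R_values_less_4:
  "R_values n x \<Longrightarrow> j < 3 * n \<Longrightarrow> x ! j < 4"
  by (simp add: R_values_def)

lemma sum_t_correction_even:
  assumes "odd n" "i \<in> {1..n}" "R_values n x" "R_values n y" "R_values n z"
  shows "even (\<Sum>j<3 * n. t_correction i (j mod n + 1) (x ! j) (y ! j) (z ! j))"
proof -
  define e where "e j = t_correction i (j mod n + 1) (x ! j) (y ! j) (z ! j)" for j
  have parities: "block_parity n x" "block_parity n y" "block_parity n z"
    using assms(3-5) by (simp_all add: R_values_def)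
  \<comment> \<open>Adding \<open>y\<close> doubles the correction on the coordinate labelled \<open>i\<close> and keeps the others of one parity.\<close>
  have block_even: "even (\<Sum>m<n. e (k * n + m) + y ! (k * n + m))" if k: "k < 3" for k
  proof (rule even_sum_if_parity_constant_but_one[where p = "i - 1"])
    show "odd n" "i - 1 < n"
      using assms(1,2) by auto
    have "(k * n + (i - 1)) mod n + 1 = i"
      unfolding mod_mult_self3 using assms(2) by auto
    then have "e (k * n + (i - 1)) = y ! (k * n + (i - 1))"
      unfolding e_def t_correction_def by (simp only: simp_thms if_True)
    then show "even (e (k * n + (i - 1)) + y ! (k * n + (i - 1)))"
      by simp
  next
    fix m assume m: "m < n" "m \<noteq> i - 1"
    then have "(k * n + m) mod n + 1 \<noteq> i"
      unfolding mod_mult_self3 using assms(2) by auto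
    then have "e (k * n + m) = carry3 (x ! (k * n + m)) (y ! (k * n + m)) (z ! (k * n + m))"
      by (simp add: e_def t_correction_def)
    also have "\<dots> = carry3 (x ! (k * n)) (y ! (k * n)) (z ! (k * n))"
      using parities k m(1) by (intro carry3_cong_mod_2) (simp_all add: block_parity_mod_2)
    finally have "e (k * n + m) = carry3 (x ! (k * n)) (y ! (k * n)) (z ! (k * n))" .
    moreover have "even (y ! (k * n + m)) \<longleftrightarrow> even (y ! (k * n))"
      using block_parity_mod_2[OF parities(2) k m(1)] by (simp add: even_iff_mod_2_eq_zero)
    ultimately show "odd (e (k * n + m) + y ! (k * n + m)) \<longleftrightarrow>
        odd (carry3 (x ! (k * n)) (y ! (k * n)) (z ! (k * n)) + y ! (k * n))"
      by simp
  qed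
  have "even (\<Sum>j<3 * n. e j + y ! j)"
    unfolding sum_lessThan_mult_blocks by (rule dvd_sum) (simp add: block_even)
  moreover have "even (\<Sum>j<3 * n. y ! j)"
    using assms(4) mod_mod_cancel[of 2 4 "\<Sum>j<3 * n. y ! j"] by (simp add: R_values_def even_iff_mod_2_eq_zero)
  ultimately show ?thesis
    by (simp add: e_def sum.distrib)
qed

lemma R_values_t_val_closed:
  assumes "odd n" "i \<in> {1..n}" "R_values n x" "R_values n y" "R_values n z"
  shows "R_values n (map (\<lambda>j. t_val i (j mod n + 1) (x ! j) (y ! j) (z ! j)) [0..<3 * n])"
proof -
  define r where "r j = t_val i (j mod n + 1) (x ! j) (y ! j) (z ! j)" for j
  define e where "e j = t_correction i (j mod n + 1) (x ! j) (y ! j) (z ! j)" for j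
  have r_lt_4: "r j < 4" if "j < 3 * n" for j
    using that assms(3-5) by (simp add: r_def t_val_lt_4 R_values_less_4)
  have r_mod_4: "(r j + 2 * e j) mod 4 = (x ! j + y ! j + z ! j) mod 4" if "j < 3 * n" for j
    using that assms(3-5) by (simp add: r_def e_def t_val_add_correction_mod_4 R_values_less_4)
  have parities: "block_parity n x" "block_parity n y" "block_parity n z"
    using assms(3-5) by (simp_all add: R_values_def)
  have "block_parity n (map r [0..<3 * n])"
    unfolding block_parity_def
  proof (intro allI impI)
    fix k a b :: nat assume k: "k < 3" and a: "a < n" and b: "b < n"
    have "r (k * n + a) mod 2 = (x ! (k * n + a) + y ! (k * n + a) + z ! (k * n + a)) mod 2"
      using r_mod_4[OF block_index_less[OF k a]] by (rule mod_2_eq_if_add_double_mod_4_eq)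
    also have "\<dots> = (x ! (k * n + b) + y ! (k * n + b) + z ! (k * n + b)) mod 2"
      using parities k a b unfolding block_parity_def by (intro mod_add_cong) blast+
    also have "\<dots> = r (k * n + b) mod 2"
      using r_mod_4[OF block_index_less[OF k b]] by (rule mod_2_eq_if_add_double_mod_4_eq[symmetric])
    finally show "map r [0..<3 * n] ! (k * n + a) mod 2 = map r [0..<3 * n] ! (k * n + b) mod 2"
      using block_index_less[OF k a] block_index_less[OF k b] by simp
  qed
  moreover have "(\<Sum>j<3 * n. r j) mod 4 = 2"
  proof -
    have "(\<Sum>j<3 * n. r j) mod 4 = (\<Sum>j<3 * n. x ! j + y ! j + z ! j) mod 4"
      using r_mod_4 sum_t_correction_even[OF assms]
      by (intro sum_mod_4_eq_if_corrections_even) (simp_all add: e_def)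
    also have "\<dots> = ((\<Sum>j<3 * n. x ! j) + (\<Sum>j<3 * n. y ! j) + (\<Sum>j<3 * n. z ! j)) mod 4"
      by (simp add: sum.distrib)
    also have "\<dots> = 2"
      using assms(3-5) by (simp add: R_values_def mod_add_eq[symmetric])
    finally show ?thesis .
  qed
  moreover have "map (\<lambda>j. t_val i (j mod n + 1) (x ! j) (y ! j) (z ! j)) [0..<3 * n] = map r [0..<3 * n]"
    by (simp add: r_def)
  ultimately show ?thesis
    using r_lt_4 by (simp only:) (simp add: R_values_def)
qed

lemma R_closed_under_t:
  assumes "odd n" "i \<in> {1..n}" "u \<in> R n" "v \<in> R n" "w \<in> R n"
  shows "map (\<lambda>j. t i (u ! j) (v ! j) (w ! j)) [0..<3 * n] \<in> R n"
proof -
  obtain x y z where x: "R_values n x" "u = labelled n x" and y: "R_values n y" "v = labelled n y"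
    and z: "R_values n z" "w = labelled n z"
    using assms(3-5) unfolding mem_R_iff by blast
  have "length x = 3 * n" "length y = 3 * n" "length z = 3 * n"
    using x y z by (simp_all add: R_values_def)
  then have "map (\<lambda>j. t i (u ! j) (v ! j) (w ! j)) [0..<3 * n] =
      labelled n (map (\<lambda>j. t_val i (j mod n + 1) (x ! j) (y ! j) (z ! j)) [0..<3 * n])"
    using x(2) y(2) z(2) by (simp add: labelled_def t_same_label)
  then show ?thesis
    using R_values_t_val_closed[OF assms(1,2) x(1) y(1) z(1)] unfolding mem_R_iff by blast
qed

theorem mainTheorem7:
  fixes n :: nat
  assumes "n > 1" and "odd n"
  shows "R n \<subseteq> lists (A n) \<and>
         (\<forall>i \<in> {1..n}. \<forall>u \<in> R n. \<forall>v \<in> R n. \<forall>w \<in> R n.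
            map (\<lambda>j. t i (u ! j) (v ! j) (w ! j)) [0..<3 * n] \<in> R n)"
  using R_subset_lists_A[of n] R_closed_under_t[OF assms(2)] assms(1) by simp

end
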